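(* Let $\mathcal H$ be a Hilbert space and $\mathcal S,\mathcal W,\mathcal A\subseteq\mathcal H$ closed subspaces such that $\mathcal S,\mathcal W,\mathcal A,\mathcal S^\perp,\mathcal W^\perp,\mathcal A^\perp$ are all nonzero and $\mathcal A\oplus\mathcal S^\perp=\mathcal H$; assume moreover $\sin(\mathcal A^\perp,\mathcal S)>0$. Fix $\lambda\in[0,1]$, let $B:=\lambda P_{\mathcal A\mathcal S^\perp}+(1-\lambda)P_{\mathcal S}$, $\mathcal B:=\mathcal R(B)$ (so that $B$ is the oblique projection onto $\mathcal B$ along $\mathcal S^\perp$), and $R_\lambda:=P_{\mathcal W}-P_{\mathcal W}B=P_{\mathcal W}P_{\mathcal S^\perp\mathcal B}$. Then for every $x\in\mathcal H$, $$\alpha_\lambda\|P_{\mathcal B^\perp}x\|\le\|R_\lambda x\|\le\beta_\lambda\|P_{\mathcal B^\perp}x\|,$$ where $$\alpha_\lambda=\Bigl(1+\lambda^2\frac{\cos^2(\mathcal A^\perp,\mathcal S)}{\sin^2(\mathcal A^\perp,\mathcal S)}\Bigr)^{1/2}\cos(\mathcal W^\perp,\mathcal S),\qquad \beta_\lambda=\Bigl(1+\lambda^2\frac{\sin^2(\mathcal A,\mathcal S)}{\cos^2(\mathcal A,\mathcal S)}\Bigr)^{1/2}\sin(\mathcal W,\mathcal S).$$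
   Context: $P_{\mathcal V}$ is the orthogonal projection onto a closed subspace $\mathcal V$, $\mathcal V^\perp$ its orthogonal complement, $\mathcal R(\cdot)$ the range. For closed subspaces with $\mathcal V_1\oplus\mathcal V_2=\mathcal H$ ($\mathcal V_1+\mathcal V_2=\mathcal H$, $\mathcal V_1\cap\mathcal V_2=\{0\}$), $P_{\mathcal V_1\mathcal V_2}$ is the oblique projection onto $\mathcal V_1$ along $\mathcal V_2$ (identity on $\mathcal V_1$, zero on $\mathcal V_2$). Angles between nonzero closed subspaces: $\cos(\mathcal V_1,\mathcal V_2):=\inf_{0\ne x\in\mathcal V_1}\|P_{\mathcal V_2}x\|/\|x\|$ and $\sin(\mathcal V_1,\mathcal V_2):=\sup_{0\ne x\in\mathcal V_1}\|P_{\mathcal V_2^\perp}x\|/\|x\|$. Under $\mathcal A\oplus\mathcal S^\perp=\mathcal H$ one has $\cos(\mathcal A,\mathcal S)>0$, and $B$ is a bounded idempotent with nullspace $\mathcal S^\perp$, so $\mathcal B\oplus\mathcal S^\perp=\mathcal H$ and $P_{\mathcal S^\perp\mathcal B}=I-B$. *)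

theory Defs
  imports "HOL-Analysis.Analysis"
begin

definition orth_proj :: "'a::real_inner set \<Rightarrow> 'a \<Rightarrow> 'a" where
  "orth_proj V x = (THE y. y \<in> V \<and> x - y \<in> orthogonal_comp V)"

text \<open>Oblique projection onto V1 along V2 (assuming V1 + V2 = H, V1 \<inter> V2 = 0).\<close>
definition obl_proj :: "'a::real_vector set \<Rightarrow> 'a set \<Rightarrow> 'a \<Rightarrow> 'a" where
  "obl_proj V1 V2 x = (THE y. y \<in> V1 \<and> x - y \<in> V2)"

definition direct_sum_UNIV :: "'a::real_vector set \<Rightarrow> 'a set \<Rightarrow> bool" where
  "direct_sum_UNIV V1 V2 \<longleftrightarrow>
     {v1 + v2 | v1 v2. v1 \<in> V1 \<and> v2 \<in> V2} = UNIV \<and> V1 \<inter> V2 = {0}"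

definition cos_sub :: "'a::real_inner set \<Rightarrow> 'a set \<Rightarrow> real" where
  "cos_sub V1 V2 = (INF x \<in> V1 - {0}. norm (orth_proj V2 x) / norm x)"

definition sin_sub :: "'a::real_inner set \<Rightarrow> 'a set \<Rightarrow> real" where
  "sin_sub V1 V2 = (SUP x \<in> V1 - {0}. norm (orth_proj (orthogonal_comp V2) x) / norm x)"

end

theory Submission
  imports Defs
begin

(*
  Write z = x - B x. Since B is a projection along S^perp, z lies in S^perp and R x = P_W z;
  for such z the angles of W and W^perp with S give cos(W^perp,S) |z| <= |P_W z| <= sin(W,S) |z|.
  Split z = y + b with y = P_{B^perp} x and b in B. Every element of B has the form
  P_S a + lam (a - P_S a) with a in A, so orthogonality of y to B means exactly that
  P_S y + lam (y - P_S y) lies in A^perp, and for the particular a producing b it gives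
  |P_S y|^2 = lam <y - P_S y, a - P_S a>. The angles of A^perp and A with S bound the ratio of
  the S- and S^perp-components of y and of b, which yields
  (1 + lam^2 cot^2(A^perp,S)) |y|^2 <= |z|^2 <= (1 + lam^2 tan^2(A,S)) |y|^2.
  That cos(A,S) > 0, and that B is bounded with closed range, is the open mapping theorem for
  P_S restricted to A, which rests on Baire category.
*)

section \<open>Orthogonal projections onto closed subspaces\<close>

lemma Cauchy_if_dist_le_add_null:
  fixes x :: "nat \<Rightarrow> 'a::metric_space"
  assumes dist_le: "\<And>m n. dist (x m) (x n) \<le> e m + e n" and null: "e \<longlonglongrightarrow> 0"
  shows "Cauchy x"
proof (rule metric_CauchyI)
  fix r :: real assume "0 < r"
  then obtain N where N: "\<forall>n\<ge>N. norm (e n - 0) < r / 2"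
    using LIMSEQ_D[OF null, of "r / 2"] by auto
  have "dist (x m) (x n) < r" if "N \<le> m" "N \<le> n" for m n
  proof -
    have "\<bar>e m\<bar> < r / 2" "\<bar>e n\<bar> < r / 2" using N that by auto
    then show ?thesis using dist_le[of m n] by linarith
  qed
  then show "\<exists>N. \<forall>m\<ge>N. \<forall>n\<ge>N. dist (x m) (x n) < r" by blast
qed

lemma parallelogram_law:
  fixes u v :: "'a::real_inner"
  shows "(norm (u + v))\<^sup>2 + (norm (u - v))\<^sup>2 = 2 * (norm u)\<^sup>2 + 2 * (norm v)\<^sup>2"
  by (simp add: power2_norm_eq_inner inner_add_left inner_add_right inner_diff_left
      inner_diff_right inner_commute)

lemma infdist_approachable:
  assumes "A \<noteq> {}" "0 < e"
  obtains a where "a \<in> A" "dist x a < infdist x A + e"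
proof -
  have "Inf ((\<lambda>a. dist x a) ` A) < infdist x A + e"
    using assms by (simp add: infdist_notempty)
  then show ?thesis
    using that cInf_lessD[of "(\<lambda>a. dist x a) ` A"] assms(1) by blast
qed

lemma minimizing_sequence_Cauchy:
  fixes C :: "'a::real_inner set"
  assumes "convex C" and y_in: "\<And>n. y n \<in> C" and d_le: "\<And>v. v \<in> C \<Longrightarrow> d \<le> dist x v"
    and dist_y: "(\<lambda>n. dist x (y n)) \<longlonglongrightarrow> d"
  shows "Cauchy y"
proof -
  define f where "f n = (dist x (y n))\<^sup>2 - d\<^sup>2" for n
  have "0 \<le> d"
    using dist_y by (rule LIMSEQ_le_const) simp
  then have f_nonneg: "0 \<le> f n" for n
    using power_mono[OF d_le[OF y_in] \<open>0 \<le> d\<close>, of 2] unfolding f_def by simp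
  show ?thesis
  proof (rule Cauchy_if_dist_le_add_null)
    show "dist (y m) (y n) \<le> sqrt (2 * f m) + sqrt (2 * f n)" for m n
    proof -
      have "(1/2) *\<^sub>R (y m + y n) \<in> C"
        using convexD[OF assms(1) y_in y_in, of "1/2" "1/2"] by (simp add: scaleR_right_distrib)
      then have "d\<^sup>2 \<le> (norm (x - (1/2) *\<^sub>R (y m + y n)))\<^sup>2"
        using d_le \<open>0 \<le> d\<close> unfolding dist_norm by (auto intro: power_mono)
      moreover have "x - (1/2) *\<^sub>R (y m + y n) = (1/2) *\<^sub>R ((x - y m) + (x - y n))"
        by (simp add: algebra_simps flip: scaleR_add_left)
      moreover have "(x - y m) - (x - y n) = y n - y m" by simp
      ultimately have "(dist (y m) (y n))\<^sup>2 \<le> 2 * f m + 2 * f n"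
        using parallelogram_law[of "x - y m" "x - y n"]
        by (simp add: f_def dist_norm norm_minus_commute power_divide)
      then have "dist (y m) (y n) \<le> sqrt (2 * f m + 2 * f n)"
        by (simp add: real_le_rsqrt)
      also have "\<dots> \<le> sqrt (2 * f m) + sqrt (2 * f n)"
        using f_nonneg by (intro sqrt_add_le_add_sqrt) auto
      finally show ?thesis .
    qed
    have "(\<lambda>n. sqrt (2 * ((dist x (y n))\<^sup>2 - d\<^sup>2))) \<longlonglongrightarrow> sqrt (2 * (d\<^sup>2 - d\<^sup>2))"
      by (intro tendsto_intros dist_y)
    then show "(\<lambda>n. sqrt (2 * f n)) \<longlonglongrightarrow> 0"
      unfolding f_def by simp
  qed
qed

lemma nearest_point_exists:
  fixes C :: "'a::{real_inner,complete_space} set"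
  assumes "closed C" "convex C" "C \<noteq> {}"
  obtains y where "y \<in> C" "\<And>v. v \<in> C \<Longrightarrow> dist x y \<le> dist x v"
proof -
  define d where "d = infdist x C"
  have "\<exists>a\<in>C. dist x a < d + 1 / Suc n" for n
    using infdist_approachable[OF assms(3), of "1 / Suc n"] unfolding d_def by auto
  then obtain y where y_in: "\<And>n. y n \<in> C" and y_close: "\<And>n. dist x (y n) < d + 1 / Suc n"
    by metis
  have d_le: "d \<le> dist x v" if "v \<in> C" for v
    using that unfolding d_def by (rule infdist_le)
  have dist_y: "(\<lambda>n. dist x (y n)) \<longlonglongrightarrow> d"
  proof (rule tendsto_sandwich[of "\<lambda>n. d" _ _ "\<lambda>n. d + 1 / Suc n"])
    show "(\<lambda>n. d + 1 / Suc n) \<longlonglongrightarrow> d"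
      using tendsto_add[OF tendsto_const LIMSEQ_inverse_real_of_nat, of d]
      by (simp add: inverse_eq_divide)
    show "\<forall>\<^sub>F n in sequentially. d \<le> dist x (y n)"
      by (intro always_eventually allI d_le y_in)
    show "\<forall>\<^sub>F n in sequentially. dist x (y n) \<le> d + 1 / Suc n"
      by (intro always_eventually allI less_imp_le y_close)
  qed simp
  have "Cauchy y"
    by (rule minimizing_sequence_Cauchy[OF assms(2) y_in d_le dist_y])
  then obtain z where "y \<longlonglongrightarrow> z"
    using Cauchy_convergent convergent_def by blast
  then have "z \<in> C"
    using closed_sequentially[OF assms(1)] y_in by blast
  have "(\<lambda>n. dist x (y n)) \<longlonglongrightarrow> dist x z"
    using \<open>y \<longlonglongrightarrow> z\<close> by (rule tendsto_dist[OF tendsto_const])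
  then have "dist x z = d" using dist_y LIMSEQ_unique by blast
  then show ?thesis using that \<open>z \<in> C\<close> d_le by auto
qed

lemma nearest_point_imp_orthogonal:
  fixes V :: "'a::real_inner set"
  assumes "subspace V" "y \<in> V" and nearest: "\<And>v. v \<in> V \<Longrightarrow> dist x y \<le> dist x v"
  shows "x - y \<in> orthogonal_comp V"
  unfolding orthogonal_comp_def orthogonal_def
proof (intro CollectI ballI)
  fix v assume "v \<in> V"
  define k where "k = v \<bullet> (x - y)"
  show "v \<bullet> (x - y) = 0"
  proof (cases "v = 0")
    case False
    then have vv: "0 < v \<bullet> v" by simp
    define t where "t = k / (v \<bullet> v)"
    have "y + t *\<^sub>R v \<in> V"
      using assms(1,2) \<open>v \<in> V\<close> by (simp add: subspace_add subspace_scale)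
    from nearest[OF this] have "(norm (x - y))\<^sup>2 \<le> (norm ((x - y) - t *\<^sub>R v))\<^sup>2"
      by (simp add: dist_norm diff_diff_eq)
    also have "\<dots> = (norm (x - y))\<^sup>2 - 2 * t * k + t\<^sup>2 * (v \<bullet> v)"
      unfolding power2_norm_eq_inner by (simp add: inner_commute k_def algebra_simps power2_eq_square)
    also have "\<dots> = (norm (x - y))\<^sup>2 - k\<^sup>2 / (v \<bullet> v)"
      using vv by (simp add: t_def field_simps power2_eq_square)
    finally have "k\<^sup>2 \<le> 0" using vv by (simp add: divide_le_0_iff)
    then show ?thesis unfolding k_def by simp
  qed simp
qed

lemma orth_proj_eqI:
  assumes "subspace V" "y \<in> V" "x - y \<in> orthogonal_comp V"
  shows "orth_proj V x = y"
  unfolding orth_proj_def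
proof (rule the_equality)
  fix y' assume y': "y' \<in> V \<and> x - y' \<in> orthogonal_comp V"
  have "y' - y \<in> V"
    using assms(1,2) y' by (simp add: subspace_diff)
  moreover have "(x - y) - (x - y') \<in> orthogonal_comp V"
    using assms(3) y' subspace_diff[OF subspace_orthogonal_comp] by blast
  ultimately have "y' - y \<in> V \<inter> orthogonal_comp V"
    by simp
  then show "y' = y"
    using orthogonal_Int_0[OF assms(1)] by simp
qed (simp add: assms(2,3))

lemma closed_orthogonal_comp: "closed (orthogonal_comp (U :: 'a::real_inner set))"
proof -
  have "orthogonal_comp U = (\<Inter>u\<in>U. {x. u \<bullet> x = 0})"
    by (auto simp: orthogonal_comp_def orthogonal_def)
  then show ?thesis
    by (simp add: closed_INT closed_hyperplane)
qed

context
  fixes V :: "'a::{real_inner,complete_space} set"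
  assumes V: "subspace V" "closed V"
begin

lemma orth_proj_characterization: "orth_proj V x \<in> V \<and> x - orth_proj V x \<in> orthogonal_comp V"
proof -
  have "V \<noteq> {}" using subspace_0[OF V(1)] by blast
  then obtain y where y: "y \<in> V" "\<And>v. v \<in> V \<Longrightarrow> dist x y \<le> dist x v"
    using nearest_point_exists[OF V(2) subspace_imp_convex[OF V(1)]] by blast
  then have "x - y \<in> orthogonal_comp V"
    by (rule nearest_point_imp_orthogonal[OF V(1)])
  with y show ?thesis
    using orth_proj_eqI[OF V(1)] by simp
qed

lemma orth_proj_in: "orth_proj V x \<in> V"
  using orth_proj_characterization by blast

lemma orth_proj_orthogonal: "x - orth_proj V x \<in> orthogonal_comp V"
  using orth_proj_characterization by blast

lemma orth_proj_id: "x \<in> V \<Longrightarrow> orth_proj V x = x"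
  by (rule orth_proj_eqI[OF V(1)]) (auto simp: subspace_orthogonal_comp subspace_0)

lemma orth_proj_eq_0: "x \<in> orthogonal_comp V \<Longrightarrow> orth_proj V x = 0"
  by (rule orth_proj_eqI[OF V(1)]) (auto simp: V subspace_0)

lemma orth_proj_pythagoras: "(norm x)\<^sup>2 = (norm (orth_proj V x))\<^sup>2 + (norm (x - orth_proj V x))\<^sup>2"
  using norm_add_Pythagorean[of "orth_proj V x" "x - orth_proj V x"] orth_proj_in orth_proj_orthogonal
  by (simp add: orthogonal_comp_def)

lemma norm_orth_proj_le: "norm (orth_proj V x) \<le> norm x"
  using orth_proj_pythagoras[of x] by (simp add: power2_le_imp_le)

lemma bounded_linear_orth_proj: "bounded_linear (orth_proj V)"
proof (rule bounded_linear_intro[where K = 1])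
  show "orth_proj V (x + y) = orth_proj V x + orth_proj V y" for x y
  proof (rule orth_proj_eqI[OF V(1)])
    show "orth_proj V x + orth_proj V y \<in> V"
      by (simp add: V(1) orth_proj_in subspace_add)
    have "(x - orth_proj V x) + (y - orth_proj V y) \<in> orthogonal_comp V"
      by (intro subspace_add[OF subspace_orthogonal_comp] orth_proj_orthogonal)
    then show "x + y - (orth_proj V x + orth_proj V y) \<in> orthogonal_comp V"
      by (simp add: add_diff_add)
  qed
  show "orth_proj V (c *\<^sub>R x) = c *\<^sub>R orth_proj V x" for c x
  proof (rule orth_proj_eqI[OF V(1)])
    show "c *\<^sub>R orth_proj V x \<in> V"
      by (simp add: V(1) orth_proj_in subspace_scale)
    have "c *\<^sub>R (x - orth_proj V x) \<in> orthogonal_comp V"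
      by (intro subspace_scale[OF subspace_orthogonal_comp] orth_proj_orthogonal)
    then show "c *\<^sub>R x - c *\<^sub>R orth_proj V x \<in> orthogonal_comp V"
      by (simp add: scaleR_diff_right)
  qed
qed (simp add: norm_orth_proj_le)

lemma inner_orth_proj_self: "orth_proj V x \<bullet> x = (norm (orth_proj V x))\<^sup>2"
proof -
  have "orth_proj V x \<bullet> (x - orth_proj V x) = 0"
    using orth_proj_in orth_proj_orthogonal by (simp add: orthogonal_comp_def orthogonal_def)
  then show ?thesis by (simp add: inner_diff_right power2_norm_eq_inner)
qed

lemma inner_orth_proj_split:
  "u \<bullet> w = orth_proj V u \<bullet> orth_proj V w + (u - orth_proj V u) \<bullet> (w - orth_proj V w)"
proof -
  have "orth_proj V u \<bullet> (w - orth_proj V w) = 0" "(u - orth_proj V u) \<bullet> orth_proj V w = 0"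
    using orth_proj_in orth_proj_orthogonal
    by (auto simp: orthogonal_comp_def orthogonal_def inner_commute)
  then show ?thesis
    by (simp add: inner_diff_left inner_diff_right)
qed

lemma orthogonal_comp_orthogonal_comp: "orthogonal_comp (orthogonal_comp V) = V"
proof
  show "orthogonal_comp (orthogonal_comp V) \<subseteq> V"
  proof
    fix x assume x: "x \<in> orthogonal_comp (orthogonal_comp V)"
    have "x - orth_proj V x \<in> orthogonal_comp (orthogonal_comp V)"
      using x orth_proj_in orthogonal_comp_subset subspace_orthogonal_comp subspace_diff by blast
    then have "x - orth_proj V x = 0"
      using orth_proj_orthogonal orthogonal_Int_0[OF subspace_orthogonal_comp] by blast
    then show "x \<in> V" using orth_proj_in by (metis eq_iff_diff_eq_0)
  qed
qed (rule orthogonal_comp_subset)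

lemma orth_proj_orthogonal_comp: "orth_proj (orthogonal_comp V) x = x - orth_proj V x"
  using orth_proj_orthogonal orth_proj_in orthogonal_comp_subset
  by (intro orth_proj_eqI) (auto simp: subspace_orthogonal_comp)

end

section \<open>Angles between subspaces\<close>

lemma cos_sub_le:
  assumes "v \<in> V1"
  shows "cos_sub V1 V2 * norm v \<le> norm (orth_proj V2 v)"
proof (cases "v = 0")
  case False
  have "cos_sub V1 V2 \<le> norm (orth_proj V2 v) / norm v"
    unfolding cos_sub_def using assms False
    by (intro cINF_lower bdd_belowI2[where m = 0]) auto
  then show ?thesis using False by (simp add: le_divide_eq)
qed simp

lemma cos_sub_greatest:
  assumes "v \<in> V1" "v \<noteq> 0" and "\<And>u. u \<in> V1 \<Longrightarrow> c * norm u \<le> norm (orth_proj V2 u)"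
  shows "c \<le> cos_sub V1 V2"
  unfolding cos_sub_def using assms by (intro cINF_greatest) (auto simp: le_divide_eq)

lemma cos_sub_nonneg:
  assumes "subspace V1" "V1 \<noteq> {0}"
  shows "0 \<le> cos_sub V1 V2"
proof -
  obtain v where "v \<in> V1" "v \<noteq> 0"
    using assms subspace_0 by blast
  then show ?thesis by (rule cos_sub_greatest) simp
qed

lemma sin_sub_ge:
  fixes V2 :: "'a::{real_inner,complete_space} set"
  assumes "v \<in> V1"
  shows "norm (orth_proj (orthogonal_comp V2) v) \<le> sin_sub V1 V2 * norm v"
proof -
  have V2c: "subspace (orthogonal_comp V2)" "closed (orthogonal_comp V2)"
    by (simp_all add: subspace_orthogonal_comp closed_orthogonal_comp)
  show ?thesis
  proof (cases "v = 0")
    case True then show ?thesis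
      using orth_proj_eq_0[OF V2c, of 0] subspace_0[OF subspace_orthogonal_comp, of "orthogonal_comp V2"]
      by simp
  next
    case False
    have "norm (orth_proj (orthogonal_comp V2) u) / norm u \<le> 1" for u
      using norm_orth_proj_le[OF V2c, of u] by (cases "u = 0") auto
    then have "norm (orth_proj (orthogonal_comp V2) v) / norm v \<le> sin_sub V1 V2"
      unfolding sin_sub_def using assms False
      by (intro cSUP_upper bdd_aboveI2[where M = 1]) auto
    then show ?thesis using False by (simp add: divide_le_eq)
  qed
qed

lemma sin_sub_nonneg:
  fixes V2 :: "'a::{real_inner,complete_space} set"
  assumes "subspace V1" "V1 \<noteq> {0}"
  shows "0 \<le> sin_sub V1 V2"
proof -
  obtain v where "v \<in> V1" "v \<noteq> 0"
    using assms subspace_0 by blast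
  then have "0 \<le> sin_sub V1 V2 * norm v"
    using order_trans[OF norm_ge_zero sin_sub_ge] by blast
  then show ?thesis
    using \<open>v \<noteq> 0\<close> by (simp add: zero_le_mult_iff)
qed

lemma norm_orth_proj_le_if_orthogonal:
  fixes S U :: "'a::{real_inner,complete_space} set"
  assumes S: "subspace S" "closed S" and U: "subspace U" "closed U"
    and "z \<in> orthogonal_comp S" "0 \<le> \<sigma>"
    and bound: "\<And>u. u \<in> U \<Longrightarrow> norm (orth_proj (orthogonal_comp S) u) \<le> \<sigma> * norm u"
  shows "norm (orth_proj U z) \<le> \<sigma> * norm z"
proof -
  define w where "w = orth_proj U z"
  have "orth_proj S w \<bullet> z = 0"
    using orth_proj_in[OF S] \<open>z \<in> orthogonal_comp S\<close> by (simp add: orthogonal_comp_def orthogonal_def)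
  moreover have "w \<bullet> z = (norm w)\<^sup>2"
    unfolding w_def by (rule inner_orth_proj_self[OF U])
  ultimately have "(norm w)\<^sup>2 = orth_proj (orthogonal_comp S) w \<bullet> z"
    unfolding orth_proj_orthogonal_comp[OF S] by (simp add: inner_diff_left)
  also have "\<dots> \<le> norm (orth_proj (orthogonal_comp S) w) * norm z"
    by (rule norm_cauchy_schwarz)
  also have "\<dots> \<le> \<sigma> * norm w * norm z"
    using bound[OF orth_proj_in[OF U]] unfolding w_def by (simp add: mult_right_mono)
  finally have "norm w * norm w \<le> (\<sigma> * norm z) * norm w"
    by (simp add: power2_eq_square ac_simps)
  then show ?thesis
    using \<open>0 \<le> \<sigma>\<close> unfolding w_def
    by (cases "norm (orth_proj U z) = 0") (simp_all add: mult_le_cancel_right)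
qed

lemma norm_orth_proj_le_sin_sub:
  fixes S W :: "'a::{real_inner,complete_space} set"
  assumes S: "subspace S" "closed S" and W: "subspace W" "closed W" "W \<noteq> {0}"
    and "z \<in> orthogonal_comp S"
  shows "norm (orth_proj W z) \<le> sin_sub W S * norm z"
  by (rule norm_orth_proj_le_if_orthogonal[OF S W(1,2) \<open>z \<in> orthogonal_comp S\<close>
      sin_sub_nonneg[OF W(1,3)] sin_sub_ge])

lemma cos_sub_le_1:
  fixes V2 :: "'a::{real_inner,complete_space} set"
  assumes "subspace V2" "closed V2" "subspace V1" "V1 \<noteq> {0}"
  shows "cos_sub V1 V2 \<le> 1"
proof -
  obtain u where "u \<in> V1" "u \<noteq> 0"
    using assms(3,4) subspace_0 by blast
  have "cos_sub V1 V2 * norm u \<le> norm (orth_proj V2 u)"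
    by (rule cos_sub_le[OF \<open>u \<in> V1\<close>])
  also have "\<dots> \<le> norm u"
    by (rule norm_orth_proj_le[OF assms(1,2)])
  finally show ?thesis
    using \<open>u \<noteq> 0\<close> by (simp add: mult_le_cancel_right1)
qed

lemma norm_orth_proj_orthogonal_comp_le_sqrt:
  fixes S :: "'a::{real_inner,complete_space} set"
  assumes S: "subspace S" "closed S" and "0 \<le> cos_sub V S" "u \<in> V"
  shows "norm (orth_proj (orthogonal_comp S) u) \<le> sqrt (1 - (cos_sub V S)\<^sup>2) * norm u"
proof -
  have "(cos_sub V S * norm u)\<^sup>2 \<le> (norm (orth_proj S u))\<^sup>2"
    using cos_sub_le[OF \<open>u \<in> V\<close>] assms(3) by (intro power_mono) auto
  then have "(norm (orth_proj (orthogonal_comp S) u))\<^sup>2 \<le> (1 - (cos_sub V S)\<^sup>2) * (norm u)\<^sup>2"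
    using orth_proj_pythagoras[OF S, of u] unfolding orth_proj_orthogonal_comp[OF S]
      power_mult_distrib left_diff_distrib by linarith
  then have "norm (orth_proj (orthogonal_comp S) u) \<le> sqrt ((1 - (cos_sub V S)\<^sup>2) * (norm u)\<^sup>2)"
    by (rule real_le_rsqrt)
  then show ?thesis
    by (simp add: real_sqrt_mult)
qed

lemma cos_sub_le_norm_orth_proj:
  fixes S W :: "'a::{real_inner,complete_space} set"
  assumes S: "subspace S" "closed S" and W: "subspace W" "closed W" "orthogonal_comp W \<noteq> {0}"
    and "z \<in> orthogonal_comp S"
  shows "cos_sub (orthogonal_comp W) S * norm z \<le> norm (orth_proj W z)"
proof -
  define c where "c = cos_sub (orthogonal_comp W) S"
  have W': "subspace (orthogonal_comp W)" "closed (orthogonal_comp W)"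
    by (simp_all add: subspace_orthogonal_comp closed_orthogonal_comp)
  have "0 \<le> c" "c \<le> 1"
    unfolding c_def using cos_sub_nonneg[OF W'(1) W(3)] cos_sub_le_1[OF S W'(1) W(3)] by auto
  then have "0 \<le> 1 - c\<^sup>2"
    by (simp add: power_le_one)
  have bound: "norm (orth_proj (orthogonal_comp S) u) \<le> sqrt (1 - c\<^sup>2) * norm u"
    if "u \<in> orthogonal_comp W" for u
    using \<open>0 \<le> c\<close> unfolding c_def by (rule norm_orth_proj_orthogonal_comp_le_sqrt[OF S _ that])
  have "norm (orth_proj (orthogonal_comp W) z) \<le> sqrt (1 - c\<^sup>2) * norm z"
    by (rule norm_orth_proj_le_if_orthogonal[OF S W' \<open>z \<in> orthogonal_comp S\<close>
          real_sqrt_ge_zero[OF \<open>0 \<le> 1 - c\<^sup>2\<close>] bound])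
  from power_mono[OF this norm_ge_zero, of 2]
  have "(norm (z - orth_proj W z))\<^sup>2 \<le> (1 - c\<^sup>2) * (norm z)\<^sup>2"
    using \<open>0 \<le> 1 - c\<^sup>2\<close> by (simp add: orth_proj_orthogonal_comp[OF W(1,2)] power_mult_distrib)
  then have "(c * norm z)\<^sup>2 \<le> (norm (orth_proj W z))\<^sup>2"
    using orth_proj_pythagoras[OF W(1,2), of z] unfolding power_mult_distrib left_diff_distrib
    by linarith
  then show ?thesis
    unfolding c_def by (rule power2_le_imp_le) simp
qed

lemma cos_sub_mult_norm_residual_le:
  fixes S V :: "'a::{real_inner,complete_space} set"
  assumes S: "subspace S" "closed S" and V: "subspace V" "V \<noteq> {0}" and "v \<in> V"
  shows "cos_sub V S * norm (v - orth_proj S v) \<le> sin_sub V S * norm (orth_proj S v)"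
proof -
  have "norm (v - orth_proj S v) \<le> sin_sub V S * norm v"
    using sin_sub_ge[OF \<open>v \<in> V\<close>, of S] by (simp add: orth_proj_orthogonal_comp[OF S])
  from mult_right_mono[OF this cos_sub_nonneg[OF V]]
  have "cos_sub V S * norm (v - orth_proj S v) \<le> sin_sub V S * (cos_sub V S * norm v)"
    by (simp add: ac_simps)
  also have "\<dots> \<le> sin_sub V S * norm (orth_proj S v)"
    using cos_sub_le[OF \<open>v \<in> V\<close>] sin_sub_nonneg[OF V] by (rule mult_left_mono)
  finally show ?thesis .
qed

section \<open>Oblique projections and the open mapping argument\<close>

context
  fixes A T :: "'a::real_vector set"
  assumes direct: "direct_sum_UNIV A T" and A: "subspace A" and T: "subspace T"
begin

lemma obl_proj_eqI: "y \<in> A \<Longrightarrow> x - y \<in> T \<Longrightarrow> obl_proj A T x = y"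
  unfolding obl_proj_def
proof (rule the_equality)
  fix y' assume y: "y \<in> A" "x - y \<in> T" and y': "y' \<in> A \<and> x - y' \<in> T"
  have "y' - y \<in> A" "(x - y) - (x - y') \<in> T"
    using A T y y' subspace_diff by blast+
  then have "y' - y \<in> A \<inter> T" by simp
  then show "y' = y" using direct unfolding direct_sum_UNIV_def by simp
qed auto

lemma obl_proj_characterization: "obl_proj A T x \<in> A \<and> x - obl_proj A T x \<in> T"
proof -
  obtain a t where "a \<in> A" "t \<in> T" "x = a + t"
    using direct unfolding direct_sum_UNIV_def by blast
  then show ?thesis using obl_proj_eqI[of a x] by simp
qed

lemma obl_proj_in: "obl_proj A T x \<in> A"
  using obl_proj_characterization by blast

lemma obl_proj_residual: "x - obl_proj A T x \<in> T"
  using obl_proj_characterization by blast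

lemma obl_proj_id: "x \<in> A \<Longrightarrow> obl_proj A T x = x"
  by (rule obl_proj_eqI) (auto simp: T subspace_0)

lemma linear_obl_proj: "linear (obl_proj A T)"
proof (rule linearI)
  show "obl_proj A T (x + y) = obl_proj A T x + obl_proj A T y" for x y
  proof (rule obl_proj_eqI)
    show "obl_proj A T x + obl_proj A T y \<in> A"
      by (simp add: A obl_proj_in subspace_add)
    have "(x - obl_proj A T x) + (y - obl_proj A T y) \<in> T"
      by (intro subspace_add[OF T] obl_proj_residual)
    then show "x + y - (obl_proj A T x + obl_proj A T y) \<in> T"
      by (simp add: add_diff_add)
  qed
  show "obl_proj A T (c *\<^sub>R x) = c *\<^sub>R obl_proj A T x" for c x
  proof (rule obl_proj_eqI)
    show "c *\<^sub>R obl_proj A T x \<in> A"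
      by (simp add: A obl_proj_in subspace_scale)
    have "c *\<^sub>R (x - obl_proj A T x) \<in> T"
      by (intro subspace_scale[OF T] obl_proj_residual)
    then show "c *\<^sub>R x - c *\<^sub>R obl_proj A T x \<in> T"
      by (simp add: scaleR_diff_right)
  qed
qed

end

lemma Baire_ball_in_closure:
  fixes F :: "nat \<Rightarrow> 'a::complete_space set"
  assumes "(\<Union>n. F n) = UNIV"
  obtains n x r where "0 < r" "ball x r \<subseteq> closure (F n)"
proof -
  have "\<exists>n. interior (closure (F n)) \<noteq> {}"
  proof (rule ccontr)
    assume no_interior: "\<nexists>n. interior (closure (F n)) \<noteq> {}"
    have "euclidean interior_of \<Union> (range (\<lambda>n. closure (F n))) = {}"
    proof (rule Baire_category_alt)
      show "completely_metrizable_space (euclidean :: 'a topology) \<or>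
          locally_compact_space (euclidean :: 'a topology) \<and> regular_space euclidean"
        using completely_metrizable_space_euclidean by blast
      show "closedin euclidean T \<and> euclidean interior_of T = {}" if "T \<in> range (\<lambda>n. closure (F n))" for T
        using that no_interior by auto
    qed simp
    moreover have "(\<Union>n. closure (F n)) = UNIV"
      using assms closure_subset by blast
    ultimately show False by simp
  qed
  then show ?thesis
    using that by (meson ex_in_conv mem_interior)
qed

lemma norm_partial_sums_diff_le_geometric:
  fixes u :: "nat \<Rightarrow> 'a::real_normed_vector"
  assumes "\<And>k. norm (u k) \<le> K * (1/2)^k" and "m \<le> n"
  shows "norm ((\<Sum>k<n. u k) - (\<Sum>k<m. u k)) \<le> 2 * K * ((1/2)^m - (1/2)^n)"
  using assms(2)
proof (induction n rule: dec_induct)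
  case (step n)
  have "norm ((\<Sum>k<Suc n. u k) - (\<Sum>k<m. u k))
      \<le> norm ((\<Sum>k<n. u k) - (\<Sum>k<m. u k)) + norm (u n)"
    by (metis add.commute add_diff_eq norm_triangle_ineq sum.lessThan_Suc)
  also have "\<dots> \<le> 2 * K * ((1/2)^m - (1/2)^n) + K * (1/2)^n"
    using step.IH assms(1)[of n] by linarith
  finally show ?case by (simp add: algebra_simps)
qed simp

lemma partial_sums_geometric_converge:
  fixes u :: "nat \<Rightarrow> 'a::{real_normed_vector,complete_space}"
  assumes A: "subspace A" "closed A" and u_in: "\<And>k. u k \<in> A"
    and u_le: "\<And>k. norm (u k) \<le> K * (1/2)^k"
  obtains a where "(\<lambda>n. \<Sum>k<n. u k) \<longlonglongrightarrow> a" "a \<in> A" "norm a \<le> 2 * K"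
proof -
  define s where "s n = (\<Sum>k<n. u k)" for n
  have s_diff: "norm (s n - s m) \<le> 2 * K * ((1/2)^m - (1/2)^n)" if "m \<le> n" for m n
    unfolding s_def using u_le that by (rule norm_partial_sums_diff_le_geometric)
  have K_nonneg: "0 \<le> 2 * K * (1/2::real)^k" for k
    using order_trans[OF norm_ge_zero u_le[of 0]] by simp
  have "Cauchy s"
  proof (rule Cauchy_if_dist_le_add_null)
    show "dist (s m) (s n) \<le> 2 * K * (1/2)^m + 2 * K * (1/2)^n" for m n
      using s_diff[of m n] s_diff[of n m] K_nonneg[of m] K_nonneg[of n]
      by (cases "m \<le> n") (auto simp: dist_norm norm_minus_commute right_diff_distrib)
    show "(\<lambda>n. 2 * K * (1/2::real)^n) \<longlonglongrightarrow> 0"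
      by (rule tendsto_mult_right_zero[OF LIMSEQ_power_zero]) simp
  qed
  then obtain a where s_lim: "s \<longlonglongrightarrow> a"
    using Cauchy_convergent convergent_def by blast
  have "s n \<in> A" for n
    unfolding s_def using u_in by (rule subspace_sum[OF A(1)])
  then have "a \<in> A"
    using closed_sequentially[OF A(2) _ s_lim] by blast
  have "norm (s n) \<le> 2 * K" for n
    using s_diff[of 0 n] K_nonneg[of n] by (simp add: s_def right_diff_distrib)
  then have "norm a \<le> 2 * K"
    using tendsto_norm[OF s_lim] by (simp add: LIMSEQ_le_const2)
  with that s_lim \<open>a \<in> A\<close> show ?thesis
    unfolding s_def by blast
qed

text \<open>The iteration step of the open mapping theorem: preimages that are exact up to half
  the norm can be summed to exact ones.\<close>

lemma exact_preimage_by_successive_approximation: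
  fixes f :: "'a::{real_normed_vector,complete_space} \<Rightarrow> 'b::real_normed_vector"
  assumes f: "bounded_linear f" and A: "subspace A" "closed A"
    and Y: "subspace Y" "f ` A \<subseteq> Y" and "0 \<le> M"
    and approx: "\<And>y. y \<in> Y \<Longrightarrow> \<exists>a\<in>A. norm a \<le> M * norm y \<and> norm (y - f a) \<le> norm y / 2"
    and "y \<in> Y"
  shows "\<exists>a\<in>A. f a = y \<and> norm a \<le> 2 * M * norm y"
proof -
  obtain g where g: "\<And>y. y \<in> Y \<Longrightarrow> g y \<in> A \<and> norm (g y) \<le> M * norm y \<and> norm (y - f (g y)) \<le> norm y / 2"
    using approx by metis
  define r where "r n = ((\<lambda>z. z - f (g z)) ^^ n) y" for n
  have r_Suc: "r (Suc n) = r n - f (g (r n))" for n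
    by (simp add: r_def)
  have r_in: "r n \<in> Y" for n
  proof (induction n)
    case (Suc n)
    then have "f (g (r n)) \<in> Y" using g Y(2) by blast
    with Suc show ?case by (simp add: r_Suc subspace_diff Y(1))
  qed (simp add: r_def \<open>y \<in> Y\<close>)
  have r_le: "norm (r n) \<le> norm y * (1/2)^n" for n
  proof (induction n)
    case (Suc n)
    then show ?case using g[OF r_in[of n]] by (simp add: r_Suc)
  qed (simp add: r_def)
  have f_sum: "f (\<Sum>k<n. g (r k)) = y - r n" for n
    using bounded_linear.linear[OF f]
    by (induction n) (simp_all add: r_Suc linear_0 linear_add, simp add: r_def)
  have gr_le: "norm (g (r k)) \<le> (M * norm y) * (1/2)^k" for k
  proof -
    have "norm (g (r k)) \<le> M * norm (r k)"
      using g[OF r_in] by blast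
    also have "\<dots> \<le> M * (norm y * (1/2)^k)"
      using r_le \<open>0 \<le> M\<close> by (rule mult_left_mono)
    finally show ?thesis by (simp add: mult.assoc)
  qed
  obtain a where sum_lim: "(\<lambda>n. \<Sum>k<n. g (r k)) \<longlonglongrightarrow> a" and "a \<in> A" "norm a \<le> 2 * (M * norm y)"
    by (rule partial_sums_geometric_converge[OF A _ gr_le]) (use g[OF r_in] in blast)
  moreover have "f a = y"
  proof (rule LIMSEQ_unique[OF bounded_linear.tendsto[OF f sum_lim]])
    have "\<forall>\<^sub>F n in sequentially. norm (r n) \<le> norm y * (1/2)^n"
      using r_le by simp
    moreover have "(\<lambda>n. norm y * (1/2::real)^n) \<longlonglongrightarrow> 0"
      by (rule tendsto_mult_right_zero[OF LIMSEQ_power_zero]) simp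
    ultimately have "r \<longlonglongrightarrow> 0"
      by (rule Lim_null_comparison)
    then have "(\<lambda>n. y - r n) \<longlonglongrightarrow> y - 0"
      by (rule tendsto_diff[OF tendsto_const])
    then show "(\<lambda>n. f (\<Sum>k<n. g (r k))) \<longlonglongrightarrow> y"
      by (simp add: f_sum)
  qed
  ultimately show ?thesis
    by (auto simp: mult.assoc)
qed

context
  fixes S A :: "'a::{real_inner,complete_space} set"
  assumes S: "subspace S" "closed S" and A: "subspace A" "closed A"
    and direct: "direct_sum_UNIV A (orthogonal_comp S)"
begin

lemma orth_proj_obl_proj: "orth_proj S (obl_proj A (orthogonal_comp S) x) = orth_proj S x"
proof -
  have "orth_proj S (x - obl_proj A (orthogonal_comp S) x) = 0"
    by (intro orth_proj_eq_0[OF S] obl_proj_residual[OF direct A(1) subspace_orthogonal_comp])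
  then show ?thesis
    using linear_diff[OF bounded_linear.linear[OF bounded_linear_orth_proj[OF S]]] by simp
qed

text \<open>The open mapping argument: Baire category applied to the sets where the oblique
  projection has norm at most n.\<close>

lemma orth_proj_approximately_onto_ball:
  obtains r N where "0 < r"
    "\<And>x. norm x < r \<Longrightarrow> \<exists>a\<in>A. norm a \<le> N \<and> norm (orth_proj S x - orth_proj S a) < r / 4"
proof -
  define P where "P = orth_proj S"
  define Q where "Q = obl_proj A (orthogonal_comp S)"
  have P_lin: "linear P"
    unfolding P_def by (rule bounded_linear.linear[OF bounded_linear_orth_proj[OF S]])
  have PQ: "P (Q h) = P h" for h
    unfolding P_def Q_def by (rule orth_proj_obl_proj)
  have "(\<Union>n. {h. norm (Q h) \<le> real n}) = UNIV"
    by (auto intro: real_arch_simple)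
  then obtain n h0 r where r: "0 < r" "ball h0 r \<subseteq> closure {h. norm (Q h) \<le> real n}"
    by (rule Baire_ball_in_closure)
  have "\<exists>a\<in>A. norm a \<le> real n \<and> norm (P x - P a) < r / 4" if "norm x < r" for x
  proof -
    have "h0 + x \<in> closure {h. norm (Q h) \<le> real n}" "h0 - x \<in> closure {h. norm (Q h) \<le> real n}"
      using r that by (auto simp: dist_norm subset_iff)
    then obtain f1 f2 where f: "norm (Q f1) \<le> real n" "dist f1 (h0 + x) < r / 4"
      "norm (Q f2) \<le> real n" "dist f2 (h0 - x) < r / 4"
      using \<open>0 < r\<close> unfolding closure_approachable by (metis divide_pos_pos mem_Collect_eq zero_less_numeral)
    define a where "a = (1/2) *\<^sub>R (Q f1 - Q f2)"
    have "a \<in> A"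
      unfolding a_def Q_def using A(1) obl_proj_in[OF direct A(1) subspace_orthogonal_comp]
      by (simp add: subspace_diff subspace_scale)
    moreover have "norm a \<le> real n"
      using norm_triangle_ineq4[of "Q f1" "Q f2"] f unfolding a_def by simp
    moreover have "norm (P x - P a) < r / 4"
    proof -
      have "(1/2) *\<^sub>R ((h0 + x - f1) - (h0 - x - f2)) = x - (1/2) *\<^sub>R (f1 - f2)"
        by (simp add: algebra_simps flip: scaleR_add_left)
      then have "P x - P a = P ((1/2) *\<^sub>R ((h0 + x - f1) - (h0 - x - f2)))"
        by (simp add: a_def PQ linear_diff[OF P_lin] linear_scale[OF P_lin])
      then have "norm (P x - P a) \<le> (1/2) * norm ((h0 + x - f1) - (h0 - x - f2))"
        using norm_orth_proj_le[OF S] unfolding P_def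
        by (metis norm_scaleR abs_of_pos zero_less_divide_1_iff zero_less_numeral)
      also have "\<dots> \<le> (1/2) * (norm (h0 + x - f1) + norm (h0 - x - f2))"
        by (rule mult_left_mono[OF norm_triangle_ineq4]) simp
      also have "\<dots> < r / 4"
        using f by (simp add: dist_norm norm_minus_commute)
      finally show ?thesis .
    qed
    ultimately show ?thesis by blast
  qed
  with that r(1) show ?thesis
    unfolding P_def by blast
qed

lemma orth_proj_approximately_onto:
  obtains M where "0 \<le> M"
    "\<And>s. s \<in> S \<Longrightarrow> \<exists>a\<in>A. norm a \<le> M * norm s \<and> norm (s - orth_proj S a) \<le> norm s / 2"
proof -
  obtain r N where "0 < r" and near:
    "\<And>x. norm x < r \<Longrightarrow> \<exists>a\<in>A. norm a \<le> N \<and> norm (orth_proj S x - orth_proj S a) < r / 4"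
    using orth_proj_approximately_onto_ball by blast
  have "0 \<le> N"
  proof -
    have "\<exists>a::'a. norm a \<le> N"
      using near[of 0] \<open>0 < r\<close> by auto
    then show ?thesis using norm_ge_zero order_trans by blast
  qed
  have "\<exists>a\<in>A. norm a \<le> 2 * N / r * norm s \<and> norm (s - orth_proj S a) \<le> norm s / 2"
    if "s \<in> S" "s \<noteq> 0" for s
  proof -
    define c where "c = 2 * norm s / r"
    have "c > 0" using that \<open>0 < r\<close> by (simp add: c_def)
    have "norm (inverse c *\<^sub>R s) < r"
      using that \<open>0 < r\<close> by (simp add: c_def)
    then obtain a where a: "a \<in> A" "norm a \<le> N" "norm (orth_proj S (inverse c *\<^sub>R s) - orth_proj S a) < r / 4"
      using near by blast
    have "orth_proj S (inverse c *\<^sub>R s) = inverse c *\<^sub>R s"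
      using that S(1) by (simp add: orth_proj_id[OF S] subspace_scale)
    then have "s - orth_proj S (c *\<^sub>R a) = c *\<^sub>R (orth_proj S (inverse c *\<^sub>R s) - orth_proj S a)"
      using \<open>c > 0\<close> bounded_linear.linear[OF bounded_linear_orth_proj[OF S]]
      by (simp add: linear_scale algebra_simps)
    then have "norm (s - orth_proj S (c *\<^sub>R a)) \<le> c * (r / 4)"
      using a(3) \<open>c > 0\<close> by simp
    also have "\<dots> = norm s / 2"
      using \<open>0 < r\<close> by (simp add: c_def)
    finally have "norm (s - orth_proj S (c *\<^sub>R a)) \<le> norm s / 2" .
    moreover have "norm (c *\<^sub>R a) \<le> 2 * N / r * norm s"
      using \<open>0 < r\<close> mult_left_mono[OF a(2), of c] \<open>c > 0\<close> by (simp add: c_def ac_simps)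
    moreover have "c *\<^sub>R a \<in> A"
      using a(1) A(1) by (simp add: subspace_scale)
    ultimately show ?thesis by blast
  qed
  moreover have "\<exists>a\<in>A. norm a \<le> 2 * N / r * norm s \<and> norm (s - orth_proj S a) \<le> norm s / 2"
    if "s = 0" for s
    using that subspace_0[OF A(1)] orth_proj_eq_0[OF S subspace_0[OF subspace_orthogonal_comp]]
    by (intro bexI[of _ 0]) auto
  moreover have "0 \<le> 2 * N / r"
    using \<open>0 \<le> N\<close> \<open>0 < r\<close> by simp
  ultimately show ?thesis
    using that by blast
qed

lemma norm_le_orth_proj_if_direct_sum: "\<exists>C>0. \<forall>a\<in>A. norm a \<le> C * norm (orth_proj S a)"
proof -
  obtain M where "0 \<le> M" and approx:
    "\<And>s. s \<in> S \<Longrightarrow> \<exists>a\<in>A. norm a \<le> M * norm s \<and> norm (s - orth_proj S a) \<le> norm s / 2"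
    using orth_proj_approximately_onto by blast
  have "norm a \<le> (2 * M + 1) * norm (orth_proj S a)" if "a \<in> A" for a
  proof -
    obtain a' where a': "a' \<in> A" "orth_proj S a' = orth_proj S a" "norm a' \<le> 2 * M * norm (orth_proj S a)"
      using exact_preimage_by_successive_approximation[OF bounded_linear_orth_proj[OF S] A S(1) _ \<open>0 \<le> M\<close>
          approx orth_proj_in[OF S]] orth_proj_in[OF S] by blast
    have "a - a' \<in> orthogonal_comp S"
      using orth_proj_orthogonal[OF S, of "a - a'"] a'(2)
        linear_diff[OF bounded_linear.linear[OF bounded_linear_orth_proj[OF S]]] by simp
    moreover have "a - a' \<in> A"
      using A(1) that a'(1) by (simp add: subspace_diff)
    ultimately have "a - a' = 0"
      using direct unfolding direct_sum_UNIV_def by blast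
    then have "a = a'" by simp
    then show ?thesis
      using a'(3) by (simp add: algebra_simps add_increasing)
  qed
  moreover have "0 < 2 * M + 1" using \<open>0 \<le> M\<close> by simp
  ultimately show ?thesis by blast
qed

lemma cos_sub_pos_if_direct_sum:
  assumes "A \<noteq> {0}"
  shows "0 < cos_sub A S"
proof -
  obtain C where "C > 0" and C: "\<And>a. a \<in> A \<Longrightarrow> norm a \<le> C * norm (orth_proj S a)"
    using norm_le_orth_proj_if_direct_sum by blast
  obtain v where "v \<in> A" "v \<noteq> 0"
    using assms subspace_0[OF A(1)] by blast
  then have "inverse C \<le> cos_sub A S"
    using C \<open>C > 0\<close> by (intro cos_sub_greatest) (auto simp: field_simps)
  then show ?thesis using \<open>C > 0\<close> by (meson inverse_positive_iff_positive less_le_trans)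
qed

lemma bounded_linear_obl_proj: "bounded_linear (obl_proj A (orthogonal_comp S))"
proof -
  obtain C where "C > 0" and C: "\<And>a. a \<in> A \<Longrightarrow> norm a \<le> C * norm (orth_proj S a)"
    using norm_le_orth_proj_if_direct_sum by blast
  have "norm (obl_proj A (orthogonal_comp S) x) \<le> norm x * C" for x
  proof -
    have "norm (obl_proj A (orthogonal_comp S) x) \<le> C * norm (orth_proj S x)"
      using C[OF obl_proj_in[OF direct A(1) subspace_orthogonal_comp]] by (simp add: orth_proj_obl_proj)
    also have "\<dots> \<le> C * norm x"
      using \<open>C > 0\<close> norm_orth_proj_le[OF S] by (simp add: mult_left_mono)
    finally show ?thesis by (simp add: mult.commute)
  qed
  then show ?thesis
    unfolding bounded_linear_def bounded_linear_axioms_def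
    using linear_obl_proj[OF direct A(1) subspace_orthogonal_comp] by blast
qed

end

section \<open>The interpolated projection\<close>

lemma sum_squares_lower_bound:
  fixes a p q m :: real
  assumes "0 \<le> p" "0 \<le> q" "0 \<le> m" "m * p \<le> a" "a\<^sup>2 \<le> p * q"
  shows "m\<^sup>2 * (a\<^sup>2 + p\<^sup>2) \<le> a\<^sup>2 + q\<^sup>2"
proof (cases "p = 0")
  case False
  then have "0 < p" using assms(1) by simp
  have mp: "(m * p)\<^sup>2 \<le> a\<^sup>2"
    using assms(1,3,4) by (intro power_mono) auto
  have "p\<^sup>2 * (m\<^sup>2 * a\<^sup>2) \<le> a\<^sup>2 * a\<^sup>2"
    using mult_right_mono[OF mp, of "a\<^sup>2"] by (simp add: power_mult_distrib ac_simps)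
  also have "\<dots> \<le> (p * q) * (p * q)"
    using assms(1,2,5) by (intro mult_mono) auto
  finally have "m\<^sup>2 * a\<^sup>2 \<le> q\<^sup>2"
    using \<open>0 < p\<close> by (simp add: power2_eq_square ac_simps mult_le_cancel_left_pos)
  then show ?thesis
    using mp by (simp add: power_mult_distrib distrib_left)
qed (use assms in simp)

lemma sum_squares_upper_bound:
  fixes a p q k :: real
  assumes "0 \<le> a" "0 \<le> p" "0 \<le> q" "0 \<le> k" "q \<le> k * a" "a\<^sup>2 \<le> p * q"
  shows "a\<^sup>2 + q\<^sup>2 \<le> k\<^sup>2 * (a\<^sup>2 + p\<^sup>2)"
proof -
  have "a * a \<le> (k * p) * a"
    using assms(6) mult_left_mono[OF assms(5,2)] by (simp add: power2_eq_square ac_simps)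
  then have "a \<le> k * p"
    using assms(1) by (cases "a = 0") (use assms(2,4) in \<open>simp_all add: mult_le_cancel_right\<close>)
  then have "a\<^sup>2 \<le> (k * p)\<^sup>2" and "q\<^sup>2 \<le> (k * a)\<^sup>2"
    using assms by (auto intro: power_mono)
  then show ?thesis
    by (simp add: power_mult_distrib distrib_left)
qed

locale interpolated_oblique_projection =
  fixes S A :: "'a::{real_inner,complete_space} set" and lam :: real
  assumes S: "subspace S" "closed S" and A: "subspace A" "closed A"
    and direct: "direct_sum_UNIV A (orthogonal_comp S)" and lam: "0 \<le> lam"
begin

definition B_lam :: "'a \<Rightarrow> 'a" where
  "B_lam x = lam *\<^sub>R obl_proj A (orthogonal_comp S) x + (1 - lam) *\<^sub>R orth_proj S x"

abbreviation P :: "'a \<Rightarrow> 'a" where "P \<equiv> orth_proj S"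
abbreviation Q :: "'a \<Rightarrow> 'a" where "Q \<equiv> obl_proj A (orthogonal_comp S)"

lemma linear_P: "linear P"
  by (rule bounded_linear.linear[OF bounded_linear_orth_proj[OF S]])

lemma linear_Q: "linear Q"
  by (rule linear_obl_proj[OF direct A(1) subspace_orthogonal_comp])

lemma P_Q: "P (Q x) = P x"
  by (rule orth_proj_obl_proj[OF S A direct])

lemma Q_P: "Q (P x) = Q x"
proof -
  have "Q (x - P x) = 0"
    using orth_proj_orthogonal[OF S] subspace_0[OF A(1)]
    by (intro obl_proj_eqI[OF direct A(1) subspace_orthogonal_comp]) auto
  then show ?thesis by (simp add: linear_diff[OF linear_Q])
qed

lemma P_B_lam: "P (B_lam x) = P x"
  unfolding B_lam_def linear_add[OF linear_P] linear_scale[OF linear_P] P_Q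
    orth_proj_id[OF S orth_proj_in[OF S]]
  by (simp add: scaleR_diff_left)

lemma B_lam_idem: "B_lam (B_lam x) = B_lam x"
proof -
  have "Q (B_lam x) = Q x"
    unfolding B_lam_def linear_add[OF linear_Q] linear_scale[OF linear_Q] Q_P
      obl_proj_id[OF direct A(1) subspace_orthogonal_comp obl_proj_in[OF direct A(1) subspace_orthogonal_comp]]
    by (simp add: scaleR_diff_left)
  then show ?thesis
    using P_B_lam[of x] by (simp add: B_lam_def[of "B_lam x"]) (simp add: B_lam_def)
qed

lemma bounded_linear_B_lam: "bounded_linear B_lam"
proof -
  have "bounded_linear (\<lambda>x. lam *\<^sub>R Q x)" "bounded_linear (\<lambda>x. (1 - lam) *\<^sub>R P x)"
    by (rule bounded_linear_compose[OF bounded_linear_scaleR_right],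
        rule bounded_linear_obl_proj[OF S A direct] bounded_linear_orth_proj[OF S])+
  then show ?thesis
    unfolding B_lam_def[abs_def] by (rule bounded_linear_add)
qed

lemma range_B_lam: "range B_lam = (\<lambda>a. P a + lam *\<^sub>R (a - P a)) ` A"
proof -
  have B_eq: "B_lam x = P (Q x) + lam *\<^sub>R (Q x - P (Q x))" for x
    by (simp add: B_lam_def P_Q algebra_simps)
  have B_A: "B_lam a = P a + lam *\<^sub>R (a - P a)" if "a \<in> A" for a
    using B_eq[of a] that by (simp add: obl_proj_id[OF direct A(1) subspace_orthogonal_comp])
  show ?thesis
  proof (intro set_eqI iffI)
    fix b assume "b \<in> range B_lam"
    then obtain x where "b = B_lam x" by blast
    then have "b = P (Q x) + lam *\<^sub>R (Q x - P (Q x))"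
      by (simp add: B_eq)
    then show "b \<in> (\<lambda>a. P a + lam *\<^sub>R (a - P a)) ` A"
      using obl_proj_in[OF direct A(1) subspace_orthogonal_comp] by blast
  next
    fix b assume "b \<in> (\<lambda>a. P a + lam *\<^sub>R (a - P a)) ` A"
    then obtain a where "a \<in> A" "b = P a + lam *\<^sub>R (a - P a)" by blast
    then show "b \<in> range B_lam"
      using B_A[of a] by (metis rangeI)
  qed
qed

lemma subspace_range_B_lam: "subspace (range B_lam)"
  using linear_subspace_image[OF bounded_linear.linear[OF bounded_linear_B_lam] subspace_UNIV] by simp

lemma closed_range_B_lam: "closed (range B_lam)"
proof -
  have "range B_lam = {x. B_lam x = x}"
    using B_lam_idem by (auto intro: range_eqI[of x B_lam x for x] simp: eq_commute)
  then show ?thesis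
    using bounded_linear.continuous_on[OF bounded_linear_B_lam continuous_on_id]
    by (simp add: closed_Collect_eq)
qed

lemma residual_B_lam: "x - B_lam x \<in> orthogonal_comp S"
  using orth_proj_orthogonal[OF S, of "x - B_lam x"] by (simp add: linear_diff[OF linear_P] P_B_lam)

lemma P_shift: "P (P x + c *\<^sub>R (x - P x)) = P x"
  using orth_proj_eq_0[OF S orth_proj_orthogonal[OF S, of x]]
  by (simp add: linear_add[OF linear_P] linear_scale[OF linear_P] orth_proj_id[OF S orth_proj_in[OF S]])

lemma inner_shift:
  "(P u + lam *\<^sub>R (u - P u)) \<bullet> w = P u \<bullet> P w + lam * ((u - P u) \<bullet> (w - P w))"
  using inner_orth_proj_split[OF S, of "P u + lam *\<^sub>R (u - P u)" w] by (simp add: P_shift)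

lemma inner_orthogonal_range_B_lam:
  assumes "y \<in> orthogonal_comp (range B_lam)" "a \<in> A"
  shows "P a \<bullet> P y + lam * ((a - P a) \<bullet> (y - P y)) = 0"
proof -
  have "P a + lam *\<^sub>R (a - P a) \<in> range B_lam"
    using assms(2) unfolding range_B_lam by blast
  then have "(P a + lam *\<^sub>R (a - P a)) \<bullet> y = 0"
    using assms(1) unfolding orthogonal_comp_def orthogonal_def by blast
  then show ?thesis
    using inner_shift[of a y] by simp
qed

lemma shift_in_orthogonal_comp_A:
  assumes "y \<in> orthogonal_comp (range B_lam)"
  shows "P y + lam *\<^sub>R (y - P y) \<in> orthogonal_comp A"
  using inner_orthogonal_range_B_lam[OF assms] inner_shift[of y]
  by (auto simp: orthogonal_comp_def orthogonal_def inner_commute)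

lemma lam_cos_sub_le_sin_sub:
  assumes "orthogonal_comp A \<noteq> {0}" "y \<in> orthogonal_comp (range B_lam)"
  shows "cos_sub (orthogonal_comp A) S * (lam * norm (y - P y)) \<le> sin_sub (orthogonal_comp A) S * norm (P y)"
  using cos_sub_mult_norm_residual_le[OF S subspace_orthogonal_comp assms(1)
      shift_in_orthogonal_comp_A[OF assms(2)]] lam
  by (simp add: P_shift)

lemma norm_P_squared_le:
  assumes "y \<in> orthogonal_comp (range B_lam)" "a \<in> A" "P y = - P a"
  shows "(norm (P y))\<^sup>2 \<le> norm (y - P y) * (lam * norm (a - P a))"
proof -
  have "(norm (P y))\<^sup>2 = lam * ((a - P a) \<bullet> (y - P y))"
    using inner_orthogonal_range_B_lam[OF assms(1,2)] assms(3)
    by (simp add: power2_norm_eq_inner)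
  also have "\<dots> \<le> lam * (norm (a - P a) * norm (y - P y))"
    using lam by (intro mult_left_mono norm_cauchy_schwarz)
  finally show ?thesis by (simp add: ac_simps)
qed

lemma orthogonal_range_B_lam_split:
  assumes y: "y \<in> orthogonal_comp (range B_lam)" and b: "b \<in> range B_lam"
    and yb: "y + b \<in> orthogonal_comp S"
  obtains a where "a \<in> A" "P y = - P a"
    "(norm b)\<^sup>2 = (norm (P y))\<^sup>2 + (lam * norm (a - P a))\<^sup>2"
    "(norm (y + b))\<^sup>2 = (norm y)\<^sup>2 + (norm b)\<^sup>2"
proof -
  obtain a where "a \<in> A" and b_eq: "b = P a + lam *\<^sub>R (a - P a)"
    using b unfolding range_B_lam by blast
  have "P (y + b) = 0"
    by (rule orth_proj_eq_0[OF S yb])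
  then have Py: "P y = - P a"
    using P_shift[of a] by (simp add: b_eq linear_add[OF linear_P] eq_neg_iff_add_eq_0)
  moreover have "(norm b)\<^sup>2 = (norm (P y))\<^sup>2 + (lam * norm (a - P a))\<^sup>2"
    using orth_proj_pythagoras[OF S, of b] lam by (simp add: b_eq P_shift Py)
  moreover have "orthogonal b y"
    using y b unfolding orthogonal_comp_def by blast
  then have "(norm (y + b))\<^sup>2 = (norm y)\<^sup>2 + (norm b)\<^sup>2"
    by (simp add: norm_add_Pythagorean orthogonal_commute)
  ultimately show ?thesis
    using that \<open>a \<in> A\<close> by blast
qed

lemma norm_sum_orthogonal_range_B_lam_lower:
  assumes A_ne: "orthogonal_comp A \<noteq> {0}" and sin_pos: "0 < sin_sub (orthogonal_comp A) S"
    and y: "y \<in> orthogonal_comp (range B_lam)" and b: "b \<in> range B_lam" and yb: "y + b \<in> orthogonal_comp S"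
  shows "(1 + (lam * cos_sub (orthogonal_comp A) S / sin_sub (orthogonal_comp A) S)\<^sup>2) * (norm y)\<^sup>2
           \<le> (norm (y + b))\<^sup>2"
proof -
  obtain a where "a \<in> A" and Py: "P y = - P a"
    and norm_b: "(norm b)\<^sup>2 = (norm (P y))\<^sup>2 + (lam * norm (a - P a))\<^sup>2"
    and norm_yb: "(norm (y + b))\<^sup>2 = (norm y)\<^sup>2 + (norm b)\<^sup>2"
    by (rule orthogonal_range_B_lam_split[OF y b yb])
  define m where "m = lam * cos_sub (orthogonal_comp A) S / sin_sub (orthogonal_comp A) S"
  have "0 \<le> m"
    using lam sin_pos cos_sub_nonneg[OF subspace_orthogonal_comp A_ne] by (simp add: m_def)
  moreover have "m * norm (y - P y) \<le> norm (P y)"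
    using lam_cos_sub_le_sin_sub[OF A_ne y] sin_pos by (simp add: m_def field_simps)
  ultimately have "m\<^sup>2 * (norm y)\<^sup>2 \<le> (norm b)\<^sup>2"
    using sum_squares_lower_bound[OF norm_ge_zero _ _ _ norm_P_squared_le[OF y \<open>a \<in> A\<close> Py]] lam
    unfolding orth_proj_pythagoras[OF S, of y] norm_b by simp
  then show ?thesis
    unfolding norm_yb m_def[symmetric] by (simp add: distrib_right)
qed

lemma norm_sum_orthogonal_range_B_lam_upper:
  assumes A_ne: "A \<noteq> {0}"
    and y: "y \<in> orthogonal_comp (range B_lam)" and b: "b \<in> range B_lam" and yb: "y + b \<in> orthogonal_comp S"
  shows "(norm (y + b))\<^sup>2 \<le> (1 + (lam * sin_sub A S / cos_sub A S)\<^sup>2) * (norm y)\<^sup>2"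
proof -
  obtain a where "a \<in> A" and Py: "P y = - P a"
    and norm_b: "(norm b)\<^sup>2 = (norm (P y))\<^sup>2 + (lam * norm (a - P a))\<^sup>2"
    and norm_yb: "(norm (y + b))\<^sup>2 = (norm y)\<^sup>2 + (norm b)\<^sup>2"
    by (rule orthogonal_range_B_lam_split[OF y b yb])
  define k where "k = lam * sin_sub A S / cos_sub A S"
  have cos_pos: "0 < cos_sub A S"
    by (rule cos_sub_pos_if_direct_sum[OF S A direct A_ne])
  have "0 \<le> k"
    using lam cos_pos sin_sub_nonneg[OF A(1) A_ne] by (simp add: k_def)
  moreover have "lam * norm (a - P a) \<le> k * norm (P y)"
    using mult_left_mono[OF cos_sub_mult_norm_residual_le[OF S A(1) A_ne \<open>a \<in> A\<close>] lam] cos_pos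
    by (simp add: k_def Py field_simps)
  ultimately have "(norm b)\<^sup>2 \<le> k\<^sup>2 * (norm y)\<^sup>2"
    using sum_squares_upper_bound[OF norm_ge_zero norm_ge_zero _ _ _ norm_P_squared_le[OF y \<open>a \<in> A\<close> Py]] lam
    unfolding orth_proj_pythagoras[OF S, of y] norm_b by simp
  then show ?thesis
    unfolding norm_yb k_def[symmetric] by (simp add: distrib_right)
qed

lemma norm_residual_B_lam_bounds:
  fixes x :: 'a
  assumes "A \<noteq> {0}" "orthogonal_comp A \<noteq> {0}" "0 < sin_sub (orthogonal_comp A) S"
  defines "y \<equiv> orth_proj (orthogonal_comp (range B_lam)) x"
  shows "sqrt (1 + (lam * cos_sub (orthogonal_comp A) S / sin_sub (orthogonal_comp A) S)\<^sup>2) * norm y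
           \<le> norm (x - B_lam x)"
    and "norm (x - B_lam x) \<le> sqrt (1 + (lam * sin_sub A S / cos_sub A S)\<^sup>2) * norm y"
proof -
  have Y: "subspace (orthogonal_comp (range B_lam))" "closed (orthogonal_comp (range B_lam))"
    by (simp_all add: subspace_orthogonal_comp closed_orthogonal_comp)
  have "orth_proj (orthogonal_comp (range B_lam)) (B_lam x) = 0"
    by (rule orth_proj_eq_0[OF Y subsetD[OF orthogonal_comp_subset rangeI]])
  then have y_eq: "y = orth_proj (orthogonal_comp (range B_lam)) (x - B_lam x)"
    unfolding y_def using linear_diff[OF bounded_linear.linear[OF bounded_linear_orth_proj[OF Y]]] by simp
  have y_in: "y \<in> orthogonal_comp (range B_lam)"
    unfolding y_def by (rule orth_proj_in[OF Y])
  have b_in: "(x - B_lam x) - y \<in> range B_lam"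
    using orth_proj_orthogonal[OF Y, of "x - B_lam x"]
    unfolding y_eq orthogonal_comp_orthogonal_comp[OF subspace_range_B_lam closed_range_B_lam] .
  have sum_eq: "y + ((x - B_lam x) - y) = x - B_lam x"
    by simp
  have "y + ((x - B_lam x) - y) \<in> orthogonal_comp S"
    unfolding sum_eq by (rule residual_B_lam)
  note lower = norm_sum_orthogonal_range_B_lam_lower[OF assms(2,3) y_in b_in this, unfolded sum_eq]
    and upper = norm_sum_orthogonal_range_B_lam_upper[OF assms(1) y_in b_in this, unfolded sum_eq]
  show "sqrt (1 + (lam * cos_sub (orthogonal_comp A) S / sin_sub (orthogonal_comp A) S)\<^sup>2) * norm y
           \<le> norm (x - B_lam x)"
    using real_sqrt_le_mono[OF lower] by (simp add: real_sqrt_mult)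
  show "norm (x - B_lam x) \<le> sqrt (1 + (lam * sin_sub A S / cos_sub A S)\<^sup>2) * norm y"
    using real_sqrt_le_mono[OF upper] by (simp add: real_sqrt_mult)
qed

end

theorem theorem2:
  fixes S W A :: "'a::{real_inner, complete_space} set" and lam :: real
  assumes "subspace S" "closed S" "subspace W" "closed W" "subspace A" "closed A"
    and "S \<noteq> {0}" "W \<noteq> {0}" "A \<noteq> {0}"
    and "orthogonal_comp S \<noteq> {0}" "orthogonal_comp W \<noteq> {0}" "orthogonal_comp A \<noteq> {0}"
    and "direct_sum_UNIV A (orthogonal_comp S)"
    and "sin_sub (orthogonal_comp A) S > 0"
    and "0 \<le> lam" "lam \<le> 1"
  defines "B \<equiv> (\<lambda>x. lam *\<^sub>R obl_proj A (orthogonal_comp S) x + (1 - lam) *\<^sub>R orth_proj S x)"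
  defines "BB \<equiv> range B"
  defines "R \<equiv> (\<lambda>x. orth_proj W x - orth_proj W (B x))"
  defines "\<alpha> \<equiv> sqrt (1 + lam\<^sup>2 * (cos_sub (orthogonal_comp A) S)\<^sup>2 / (sin_sub (orthogonal_comp A) S)\<^sup>2)
                  * cos_sub (orthogonal_comp W) S"
  defines "\<beta> \<equiv> sqrt (1 + lam\<^sup>2 * (sin_sub A S)\<^sup>2 / (cos_sub A S)\<^sup>2) * sin_sub W S"
  shows "\<forall>x. \<alpha> * norm (orth_proj (orthogonal_comp BB) x) \<le> norm (R x)
           \<and> norm (R x) \<le> \<beta> * norm (orth_proj (orthogonal_comp BB) x)"
proof
  fix x
  interpret interpolated_oblique_projection S A lam
    using assms(1,2,5,6,13,15) by unfold_locales
  have B_eq: "B = B_lam"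
    unfolding B_def B_lam_def[abs_def] ..
  define y where "y = orth_proj (orthogonal_comp BB) x"
  define z where "z = x - B x"
  have "R x = orth_proj W z"
    unfolding R_def z_def
    using linear_diff[OF bounded_linear.linear[OF bounded_linear_orth_proj[OF assms(3,4)]]] by simp
  moreover have "z \<in> orthogonal_comp S"
    unfolding z_def B_eq by (rule residual_B_lam)
  ultimately have W_bounds: "cos_sub (orthogonal_comp W) S * norm z \<le> norm (R x)"
      "norm (R x) \<le> sin_sub W S * norm z"
    using cos_sub_le_norm_orth_proj[OF assms(1-4,11)] norm_orth_proj_le_sin_sub[OF assms(1-4,8)] by simp_all
  have z_bounds:
    "sqrt (1 + lam\<^sup>2 * (cos_sub (orthogonal_comp A) S)\<^sup>2 / (sin_sub (orthogonal_comp A) S)\<^sup>2) * norm y \<le> norm z"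
    "norm z \<le> sqrt (1 + lam\<^sup>2 * (sin_sub A S)\<^sup>2 / (cos_sub A S)\<^sup>2) * norm y"
    using norm_residual_B_lam_bounds[OF assms(9,12,14), of x]
    unfolding y_def z_def BB_def B_eq by (simp_all add: power_divide power_mult_distrib)
  have "\<alpha> * norm y \<le> cos_sub (orthogonal_comp W) S * norm z"
    unfolding \<alpha>_def using mult_left_mono[OF z_bounds(1) cos_sub_nonneg[OF subspace_orthogonal_comp assms(11)]]
    by (simp add: ac_simps)
  moreover have "sin_sub W S * norm z \<le> \<beta> * norm y"
    unfolding \<beta>_def using mult_left_mono[OF z_bounds(2) sin_sub_nonneg[OF assms(3,8)]]
    by (simp add: ac_simps)
  ultimately show "\<alpha> * norm y \<le> norm (R x) \<and> norm (R x) \<le> \<beta> * norm y"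
    using W_bounds by linarith
qed

end
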